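(* Let $\mathcal F,\mathcal H,\mathcal G$ be lattice filters of an MV-algebra $\mathcal L$ with $\mathcal F\subseteq\mathcal G$ and $\mathcal H\subseteq\mathcal G$. Then $$\mathcal F\subseteq\mathcal H\sqsubseteq\!\!\to\mathcal G\iff\mathcal H\subseteq\mathcal F\sqsubseteq\!\!\to\mathcal G.$$
   Context: $\mathcal L=(L,\oplus,\lnot,0)$ is an MV-algebra. We write $1=\lnot0$, $x\otimes y=\lnot(\lnot x\oplus\lnot y)$, and $x\to y=\lnot x\oplus y$, and use the usual lattice order. A lattice filter is a nonempty upward-closed subset closed under $\wedge$. For an upward-closed set $\mathcal F$ and $a\in L$, let $\mathcal F_a=\{z: z\to a\notin\mathcal F\}$. For $\mathcal F\subseteq\mathcal G$ we put $\mathcal F\sqsubseteq\!\!\to\mathcal G=\bigcap_{a\in L\setminus\mathcal G}\mathcal F_a$. *)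

theory Defs
  imports Main
begin

text \<open>MV-algebras (Chang's axioms, in Mundici's reduced form), on a carrier set L.\<close>

locale mv_algebra =
  fixes L :: "'a set"
    and oplus :: "'a \<Rightarrow> 'a \<Rightarrow> 'a" (infixl "\<oplus>" 65)
    and neg :: "'a \<Rightarrow> 'a"
    and zero :: "'a"
  assumes zero_closed: "zero \<in> L"
    and oplus_closed: "\<lbrakk>x \<in> L; y \<in> L\<rbrakk> \<Longrightarrow> x \<oplus> y \<in> L"
    and neg_closed: "x \<in> L \<Longrightarrow> neg x \<in> L"
    and oplus_assoc: "\<lbrakk>x \<in> L; y \<in> L; z \<in> L\<rbrakk> \<Longrightarrow> x \<oplus> (y \<oplus> z) = (x \<oplus> y) \<oplus> z"
    and oplus_comm: "\<lbrakk>x \<in> L; y \<in> L\<rbrakk> \<Longrightarrow> x \<oplus> y = y \<oplus> x"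
    and oplus_zero: "x \<in> L \<Longrightarrow> x \<oplus> zero = x"
    and neg_neg: "x \<in> L \<Longrightarrow> neg (neg x) = x"
    and oplus_one: "x \<in> L \<Longrightarrow> x \<oplus> neg zero = neg zero"
    and lukasiewicz: "\<lbrakk>x \<in> L; y \<in> L\<rbrakk> \<Longrightarrow> neg (neg x \<oplus> y) \<oplus> y = neg (neg y \<oplus> x) \<oplus> x"
begin

definition one :: 'a where "one = neg zero"

definition otimes :: "'a \<Rightarrow> 'a \<Rightarrow> 'a" (infixl "\<otimes>" 70)
  where "x \<otimes> y = neg (neg x \<oplus> neg y)"

definition impl :: "'a \<Rightarrow> 'a \<Rightarrow> 'a" (infixr "\<rightharpoonup>" 60)
  where "x \<rightharpoonup> y = neg x \<oplus> y"

definition leq :: "'a \<Rightarrow> 'a \<Rightarrow> bool"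
  where "leq x y \<longleftrightarrow> neg x \<oplus> y = one"

definition meet :: "'a \<Rightarrow> 'a \<Rightarrow> 'a"
  where "meet x y = x \<otimes> (neg x \<oplus> y)"

definition up_closed :: "'a set \<Rightarrow> bool"
  where "up_closed F \<longleftrightarrow> F \<subseteq> L \<and> (\<forall>x\<in>F. \<forall>y\<in>L. leq x y \<longrightarrow> y \<in> F)"

definition lattice_filter :: "'a set \<Rightarrow> bool"
  where "lattice_filter F \<longleftrightarrow> F \<noteq> {} \<and> up_closed F \<and> (\<forall>x\<in>F. \<forall>y\<in>F. meet x y \<in> F)"

definition Fsub :: "'a set \<Rightarrow> 'a \<Rightarrow> 'a set"
  where "Fsub F a = {z \<in> L. (z \<rightharpoonup> a) \<notin> F}"

definition rel_impl :: "'a set \<Rightarrow> 'a set \<Rightarrow> 'a set"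
  where "rel_impl F G = {z \<in> L. \<forall>a \<in> L - G. z \<in> Fsub F a}"

end

end

theory Submission
  imports Defs
begin

(* The theorem is a Galois-type symmetry, and it
   rests on a single MV-algebra inequality: y \<le> (y \<rightarrow> a) \<rightarrow> a.

   Indeed, assume F \<subseteq> H \<sqsubseteq>\<rightarrow> G, and let y \<in> H and a \<notin> G.  If y \<rightarrow> a were
   in F, then (y \<rightarrow> a) \<rightarrow> a \<notin> H; but (y \<rightarrow> a) \<rightarrow> a lies above y \<in> H and H is
   upward closed, a contradiction.  Hence y \<in> F \<sqsubseteq>\<rightarrow> G. *)

context mv_algebra
begin

lemma one_closed: "one \<in> L"
  unfolding one_def using zero_closed neg_closed by blast

lemma impl_closed: "\<lbrakk>x \<in> L; y \<in> L\<rbrakk> \<Longrightarrow> x \<rightharpoonup> y \<in> L"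
  unfolding impl_def using neg_closed oplus_closed by blast

lemma zero_oplus: "x \<in> L \<Longrightarrow> zero \<oplus> x = x"
  using oplus_comm[of zero x] oplus_zero[of x] zero_closed by simp

lemma one_oplus: "x \<in> L \<Longrightarrow> one \<oplus> x = one"
  using oplus_comm[OF one_closed] oplus_one unfolding one_def by simp

text \<open>Complementation law: \<not>x \<oplus> x = 1, obtained from the \L{}ukasiewicz
  axiom instantiated at y = 1.\<close>
lemma neg_oplus_self: "x \<in> L \<Longrightarrow> neg x \<oplus> x = one"
proof -
  assume x: "x \<in> L"
  have "neg (neg x \<oplus> one) \<oplus> one = neg (neg one \<oplus> x) \<oplus> x"
    using lukasiewicz[OF x one_closed] .
  moreover have "neg x \<oplus> one = one"
    using oplus_one neg_closed x unfolding one_def by simp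
  moreover have "neg one = zero" using neg_neg zero_closed unfolding one_def by simp
  ultimately show ?thesis
    using zero_oplus one_oplus x one_closed neg_closed by simp
qed

lemma leq_oplus_left:
  assumes x: "x \<in> L" and t: "t \<in> L"
  shows "leq x (t \<oplus> x)"
proof -
  have "neg x \<oplus> (t \<oplus> x) = neg x \<oplus> (x \<oplus> t)" using oplus_comm t x by simp
  also have "\<dots> = (neg x \<oplus> x) \<oplus> t" using oplus_assoc neg_closed x t by simp
  also have "\<dots> = one" using neg_oplus_self one_oplus x t by simp
  finally show ?thesis unfolding leq_def .
qed

text \<open>The key inequality y \<le> (y \<rightarrow> a) \<rightarrow> a: by the \L{}ukasiewicz axiom
  (y \<rightarrow> a) \<rightarrow> a = \<not>(\<not>a \<oplus> y) \<oplus> y, which lies above y.\<close>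
lemma leq_double_impl:
  assumes y: "y \<in> L" and a: "a \<in> L"
  shows "leq y ((y \<rightharpoonup> a) \<rightharpoonup> a)"
proof -
  have "(y \<rightharpoonup> a) \<rightharpoonup> a = neg (neg a \<oplus> y) \<oplus> y"
    unfolding impl_def using lukasiewicz[OF y a] .
  moreover have "neg (neg a \<oplus> y) \<in> L" using neg_closed oplus_closed a y by blast
  ultimately show ?thesis using leq_oplus_left y by simp
qed

lemma rel_impl_swap:
  assumes H: "up_closed H" and sub: "F \<subseteq> rel_impl H G"
  shows "H \<subseteq> rel_impl F G"
proof
  fix y assume yH: "y \<in> H"
  have yL: "y \<in> L" using H yH unfolding up_closed_def by blast
  have "y \<in> Fsub F a" if aLG: "a \<in> L - G" for a
  proof (rule ccontr)
    assume "y \<notin> Fsub F a"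
    hence "y \<rightharpoonup> a \<in> F" using yL unfolding Fsub_def by blast
    hence not_in_H: "(y \<rightharpoonup> a) \<rightharpoonup> a \<notin> H"
      using sub aLG unfolding rel_impl_def Fsub_def by blast
    have aL: "a \<in> L" using aLG by blast
    have "(y \<rightharpoonup> a) \<rightharpoonup> a \<in> H"
      using H yH leq_double_impl[OF yL aL] impl_closed[OF impl_closed[OF yL aL] aL]
      unfolding up_closed_def by blast
    with not_in_H show False by contradiction
  qed
  thus "y \<in> rel_impl F G" using yL unfolding rel_impl_def by blast
qed

end

theorem mainTheorem6:
  assumes "mv_algebra L oplus neg zero"
    and "mv_algebra.lattice_filter L oplus neg zero F"
    and "mv_algebra.lattice_filter L oplus neg zero H"
    and "mv_algebra.lattice_filter L oplus neg zero G"
    and "F \<subseteq> G" and "H \<subseteq> G"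
  shows "F \<subseteq> mv_algebra.rel_impl L oplus neg H G
     \<longleftrightarrow> H \<subseteq> mv_algebra.rel_impl L oplus neg F G"
proof -
  interpret mv_algebra L oplus neg zero by (fact assms(1))
  have "up_closed F" and "up_closed H"
    using assms(2,3) unfolding lattice_filter_def by simp_all
  thus ?thesis using rel_impl_swap by blast
qed

end
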